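(* Let $\gamma\in[0,1]$. Let $\Lambda:\mathbb{R}\to\mathbb{R}$ be $C^2$, monotonically increasing and bi-asymptotically constant with $\lim_{t\to\pm\infty}\Lambda(t)=\lambda^\pm$, and for $r>0$ put $\Lambda_r(\tau)=\Lambda(r\tau)$. Let $V_p(\Lambda_r(\tau))>0$ and $c(\Lambda_r(\tau))>0$ be parameter functions, set $V_p^-=\lim_{\tau\to-\infty}V_p(\Lambda_r(\tau))>0$, and consider the nonautonomous system $$\frac{dv}{d\tau}=\frac{(1-\gamma)V_p(\Lambda_r(\tau))^2}{(V_p^-)^2}m^3-(1-\gamma m^3)v^2,\qquad \frac{dm}{d\tau}=(1-m)v-c(\Lambda_r(\tau))m .$$ Assume the frozen system (parameters fixed at $\Lambda_r=\lambda$) has three equilibria at $\lambda=\lambda^-$, namely $\mathcal{O}=(0,0)$, a saddle $\mathcal{U}^-$ and a stable storm state $\mathcal{S}^-$, and three equilibria at $\lambda=\lambda^+$, namely $\mathcal{O}$, $\mathcal{U}^+$, $\mathcal{S}^+$. Assume there exist continuous paths $(\tau,p_u(\tau))$ and $(\tau,p_s(\tau))$, where for each $\tau$, $p_u(\tau)$ is the unstable (saddle) storm equilibrium and $p_s(\tau)$ the stable storm equilibrium of the frozen system at $\Lambda_r(\tau)$, with $p_u(\tau)\ne p_s(\tau)$ for all $\tau$, $p_u(\tau)\to\mathcal{U}^\pm$ and $p_s(\tau)\to\mathcal{S}^\pm$ as $\tau\to\pm\infty$. If either $\tau\mapsto V_p(\Lambda_r(\tau))$ or $\tau\mapsto c(\Lambda_r(\tau))$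 is nonincreasing, then there is no rate-induced tipping away from the stable storm state $\mathcal{S}^-$ to the non-storm state $\mathcal{O}$: the solution that converges to $\mathcal{S}^-$ as $\tau\to-\infty$ does not converge to $\mathcal{O}$ as $\tau\to\infty$.
   Context: For frozen parameter values, the positive equilibria are the points $(v,v/(v+c))$ with $v>0$ a zero of $p(v,V_p,c)=(1-\gamma)(V_p/V_p^-)^2v+\gamma v^3-(v+c)^3$; $\mathcal{O}=(0,0)$ is always a stable equilibrium (non-storm state). Rate-induced tipping away from $\mathcal{S}^-$ to $\mathcal{O}$ means that for some rate $r>0$ the solution of the nonautonomous system limiting to $\mathcal{S}^-$ as $\tau\to-\infty$ fails to end-point track the stable path $p_s$ and instead converges to $\mathcal{O}$ as $\tau\to\infty$. *)

theory Defs
  imports "HOL-Analysis.Analysis"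
begin

text \<open>Frozen vector field of the storm model with parameters
  A = V_p / V_p^- and C = c:
  dv/dt = (1-gamma) A^2 m^3 - (1 - gamma m^3) v^2,  dm/dt = (1-m) v - C m.\<close>
definition storm_field :: "real \<Rightarrow> real \<Rightarrow> real \<Rightarrow> real \<times> real \<Rightarrow> real \<times> real" where
  "storm_field \<gamma> A C x = (case x of (v, m) \<Rightarrow>
     ((1 - \<gamma>) * A\<^sup>2 * m ^ 3 - (1 - \<gamma> * m ^ 3) * v\<^sup>2, (1 - m) * v - C * m))"

definition jac11 :: "real \<Rightarrow> real \<Rightarrow> real \<Rightarrow> real \<times> real \<Rightarrow> real" where
  "jac11 \<gamma> A C x = (case x of (v, m) \<Rightarrow> - 2 * (1 - \<gamma> * m ^ 3) * v)"
definition jac12 :: "real \<Rightarrow> real \<Rightarrow> real \<Rightarrow> real \<times> real \<Rightarrow> real" where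
  "jac12 \<gamma> A C x = (case x of (v, m) \<Rightarrow> 3 * (1 - \<gamma>) * A\<^sup>2 * m\<^sup>2 + 3 * \<gamma> * m\<^sup>2 * v\<^sup>2)"
definition jac21 :: "real \<Rightarrow> real \<Rightarrow> real \<Rightarrow> real \<times> real \<Rightarrow> real" where
  "jac21 \<gamma> A C x = (case x of (v, m) \<Rightarrow> 1 - m)"
definition jac22 :: "real \<Rightarrow> real \<Rightarrow> real \<Rightarrow> real \<times> real \<Rightarrow> real" where
  "jac22 \<gamma> A C x = (case x of (v, m) \<Rightarrow> - v - C)"

definition jac_eigenvalue :: "real \<Rightarrow> real \<Rightarrow> real \<Rightarrow> real \<times> real \<Rightarrow> complex \<Rightarrow> bool" where
  "jac_eigenvalue \<gamma> A C x z \<longleftrightarrow>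
     (complex_of_real (jac11 \<gamma> A C x) - z) * (complex_of_real (jac22 \<gamma> A C x) - z)
       - complex_of_real (jac12 \<gamma> A C x) * complex_of_real (jac21 \<gamma> A C x) = 0"

definition is_equilibrium :: "real \<Rightarrow> real \<Rightarrow> real \<Rightarrow> real \<times> real \<Rightarrow> bool" where
  "is_equilibrium \<gamma> A C x \<longleftrightarrow> storm_field \<gamma> A C x = (0, 0)"

definition storm_equilibrium :: "real \<Rightarrow> real \<Rightarrow> real \<Rightarrow> real \<times> real \<Rightarrow> bool" where
  "storm_equilibrium \<gamma> A C x \<longleftrightarrow> is_equilibrium \<gamma> A C x \<and> fst x > 0"

definition saddle_eq :: "real \<Rightarrow> real \<Rightarrow> real \<Rightarrow> real \<times> real \<Rightarrow> bool" where
  "saddle_eq \<gamma> A C x \<longleftrightarrow> is_equilibrium \<gamma> A C x \<and>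
     (\<exists>\<mu>1 \<mu>2::real. \<mu>1 < 0 \<and> 0 < \<mu>2 \<and>
        jac_eigenvalue \<gamma> A C x (complex_of_real \<mu>1) \<and> jac_eigenvalue \<gamma> A C x (complex_of_real \<mu>2))"

definition stable_eq :: "real \<Rightarrow> real \<Rightarrow> real \<Rightarrow> real \<times> real \<Rightarrow> bool" where
  "stable_eq \<gamma> A C x \<longleftrightarrow> is_equilibrium \<gamma> A C x \<and>
     (\<forall>z. jac_eigenvalue \<gamma> A C x z \<longrightarrow> Re z < 0)"

definition phys_equilibria :: "real \<Rightarrow> real \<Rightarrow> real \<Rightarrow> (real \<times> real) set" where
  "phys_equilibria \<gamma> A C = {x. is_equilibrium \<gamma> A C x \<and> fst x \<ge> 0}"

definition C2_fun :: "(real \<Rightarrow> real) \<Rightarrow> bool" where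
  "C2_fun f \<longleftrightarrow> (\<exists>f' f''. (\<forall>t. (f has_real_derivative f' t) (at t)) \<and>
      (\<forall>t. (f' has_real_derivative f'' t) (at t)) \<and> continuous_on UNIV f'')"

end

theory Submission
  imports Defs
begin

(*
  Write A = V_p/V_p^- and C = c along the path.  Storm equilibria at parameters (a, c) are the
  points (v, v/(v+c)) with v a positive root of p(v) = (1-gamma) a^2 v + gamma v^3 - (v+c)^3.
  If there are two such roots, p is positive exactly between them, and linear stability (a positive Jacobian
  determinant, which has the sign of -p'(v)) singles out the larger root as the stable one.  Since
  p is homogeneous of degree 3 in (a, c, v), whether p is somewhere positive depends only on c/a.
  Pick (a, c) maximising c/a over the parameter path and its two limits, w with p(w) > 0, and q
  just below w/(w+c), where both components of the vector field at (w, q) are positive.  If A or C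
  is nonincreasing, then with k(t) = A(t)/a resp. C(t)/c the region {v > k(t) w, m > q} is forward
  invariant; the solution leaving S^- starts in it, because k(-oo) w lies below the stable root,
  and then v stays above k(+oo) w > 0, so it cannot tend to O.
*)

section \<open>Barriers and limits of real functions\<close>

lemma has_vector_derivative_PairD:
  assumes "((\<lambda>t. (f t, g t)) has_vector_derivative D) F"
  shows "(f has_vector_derivative fst D) F" "(g has_vector_derivative snd D) F"
  using has_derivative_fst[OF assms[unfolded has_vector_derivative_def]]
    has_derivative_snd[OF assms[unfolded has_vector_derivative_def]]
  by (simp_all add: has_vector_derivative_def)

lemma first_point_of_closed_set:
  fixes Z :: "real set"
  assumes "closed Z" "Z \<noteq> {}" "eventually (\<lambda>t. t \<notin> Z) at_bot"
  shows "\<exists>t\<in>Z. \<forall>s<t. s \<notin> Z"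
proof -
  obtain T where "\<And>t. t \<le> T \<Longrightarrow> t \<notin> Z"
    using assms(3) unfolding eventually_at_bot_linorder by blast
  then have bdd: "bdd_below Z" by (meson bdd_below.I linear)
  have "Inf Z \<in> Z" using closed_contains_Inf[OF assms(2) bdd assms(1)] .
  moreover have "s \<notin> Z" if "s < Inf Z" for s
    using cInf_lower[OF _ bdd, of s] that by fastforce
  ultimately show ?thesis by blast
qed

lemma isCont_le_if_less_on_left:
  fixes f g :: "real \<Rightarrow> real"
  assumes "isCont f t" "isCont g t" "\<And>s. s < t \<Longrightarrow> g s < f s"
  shows "g t \<le> f t"
proof -
  have "(f \<longlongrightarrow> f t) (at_left t)" "(g \<longlongrightarrow> g t) (at_left t)"
    using assms(1,2) unfolding isCont_def filterlim_at_split by simp_all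
  then have "((\<lambda>s. f s - g s) \<longlongrightarrow> f t - g t) (at_left t)" by (rule tendsto_diff)
  moreover have "eventually (\<lambda>s. 0 \<le> f s - g s) (at_left t)"
    unfolding eventually_at_left_field by (intro exI[of _ "t - 1"]) (simp add: assms(3) less_imp_le)
  ultimately have "0 \<le> f t - g t"
    by (rule tendsto_lowerbound) (simp add: trivial_limit_at_left_real)
  then show ?thesis by simp
qed

lemma deriv_pos_not_first_touch:
  fixes f g :: "real \<Rightarrow> real"
  assumes "(f has_real_derivative D) (at t)" "0 < D" "antimono g"
    and "f t \<le> g t" "\<And>s. s < t \<Longrightarrow> g s < f s"
  shows False
proof -
  obtain d where "0 < d" and below: "\<And>h. 0 < h \<Longrightarrow> h < d \<Longrightarrow> f (t - h) < f t"
    using DERIV_pos_inc_left[OF assms(1,2)] by blast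
  have "f (t - d / 2) < f t" using below \<open>0 < d\<close> by simp
  moreover have "g t \<le> g (t - d / 2)" using assms(3) \<open>0 < d\<close> by (simp add: antimonoD)
  moreover have "g (t - d / 2) < f (t - d / 2)" using assms(5) \<open>0 < d\<close> by simp
  ultimately show False using assms(4) by simp
qed

lemma antimono_barrier_invariant:
  fixes v m b F1 F2 :: "real \<Rightarrow> real"
  assumes dv: "\<And>t. (v has_real_derivative F1 t) (at t)"
    and dm: "\<And>t. (m has_real_derivative F2 t) (at t)"
    and b: "antimono b" "continuous_on UNIV b"
    and F1: "\<And>t. v t = b t \<Longrightarrow> q \<le> m t \<Longrightarrow> 0 < F1 t"
    and F2: "\<And>t. m t = q \<Longrightarrow> b t \<le> v t \<Longrightarrow> 0 < F2 t"
    and start: "eventually (\<lambda>t. b t < v t \<and> q < m t) at_bot"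
  shows "b t < v t \<and> q < m t"
proof (rule ccontr)
  define Z where "Z = {t. v t \<le> b t} \<union> {t. m t \<le> q}"
  assume "\<not> (b t < v t \<and> q < m t)"
  then have "t \<in> Z" by (auto simp: Z_def)
  have cont: "isCont v s" "isCont m s" "isCont b s" for s
    using DERIV_isCont[OF dv] DERIV_isCont[OF dm] b(2) by (auto simp: continuous_on_eq_continuous_at)
  then have "closed Z" unfolding Z_def
    by (intro closed_Un closed_Collect_le continuous_at_imp_continuous_on ballI) auto
  moreover have "eventually (\<lambda>s. s \<notin> Z) at_bot"
    using start by eventually_elim (auto simp: Z_def)
  ultimately obtain t1 where "t1 \<in> Z" and "\<forall>s<t1. s \<notin> Z"
    using first_point_of_closed_set[of Z] \<open>t \<in> Z\<close> by blast
  then have before: "\<And>s. s < t1 \<Longrightarrow> b s < v s \<and> q < m s" by (auto simp: Z_def)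
  have "b t1 \<le> v t1" "q \<le> m t1"
    using isCont_le_if_less_on_left[where f = v and g = b]
      isCont_le_if_less_on_left[where f = m and g = "\<lambda>_. q"] cont before
    by auto
  show False
  proof (cases "m t1 \<le> q")
    case True
    with \<open>q \<le> m t1\<close> have "m t1 = q" by simp
    with F2 \<open>b t1 \<le> v t1\<close> have "0 < F2 t1" by blast
    from deriv_pos_not_first_touch[OF dm this, of "\<lambda>_. q"] show False
      using \<open>m t1 = q\<close> before by (auto simp: antimono_def)
  next
    case False
    with \<open>t1 \<in> Z\<close> \<open>b t1 \<le> v t1\<close> have "v t1 = b t1" by (simp add: Z_def)
    with F1 \<open>q \<le> m t1\<close> have "0 < F1 t1" by blast
    from deriv_pos_not_first_touch[OF dv this b(1)] show False
      using \<open>v t1 = b t1\<close> before by auto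
  qed
qed

lemma continuous_bounded_by_max_or_limit:
  fixes f :: "real \<Rightarrow> real"
  assumes "continuous_on UNIV f" "(f \<longlongrightarrow> L1) at_bot" "(f \<longlongrightarrow> L2) at_top"
  shows "(\<exists>t. \<forall>s. f s \<le> f t) \<or> (\<forall>s. f s \<le> L1) \<or> (\<forall>s. f s \<le> L2)"
proof (cases "\<exists>t0. max L1 L2 < f t0")
  case False
  then show ?thesis by (auto simp: not_less max_def split: if_splits)
next
  case True
  then obtain t0 where t0: "max L1 L2 < f t0" by blast
  \<comment> \<open>outside a compact interval \<open>f\<close> stays below \<open>f t0\<close>, and on it \<open>f\<close> attains its maximum\<close>
  have "eventually (\<lambda>s. f s < f t0) at_bot" "eventually (\<lambda>s. f s < f t0) at_top"
    using assms(2,3) t0 by (auto intro: order_tendstoD(2))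
  then obtain a b where a: "\<And>s. s \<le> a \<Longrightarrow> f s < f t0" and b: "\<And>s. b \<le> s \<Longrightarrow> f s < f t0"
    unfolding eventually_at_bot_linorder eventually_at_top_linorder by blast
  define K where "K = {min a t0 .. max b t0}"
  have "\<exists>t\<in>K. \<forall>s\<in>K. f s \<le> f t"
    unfolding K_def by (intro continuous_attains_sup continuous_on_subset[OF assms(1)]) auto
  then obtain t where max: "\<And>s. s \<in> K \<Longrightarrow> f s \<le> f t" by blast
  have "f s \<le> f t" for s
  proof (cases "s \<in> K")
    case False
    then have "f s < f t0" using a b by (force simp: K_def)
    also have "f t0 \<le> f t" using max by (simp add: K_def)
    finally show ?thesis by simp
  qed (rule max)
  then show ?thesis by blast
qed

lemma antimono_tendsto_at_top_le:
  fixes k :: "real \<Rightarrow> real"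
  assumes "antimono k" "(k \<longlongrightarrow> L) at_top"
  shows "L \<le> k t"
  using assms(2) by (rule tendsto_upperbound)
    (use assms(1) in \<open>auto simp: eventually_at_top_linorder antimonoD intro!: exI[of _ t]\<close>)

section \<open>The cubic of storm equilibria\<close>

definition storm_cubic :: "real \<Rightarrow> real \<Rightarrow> real \<Rightarrow> real \<Rightarrow> real" where
  "storm_cubic \<gamma> a c v = (1 - \<gamma>) * a\<^sup>2 * v + \<gamma> * v ^ 3 - (v + c) ^ 3"

definition storm_cubic_deriv :: "real \<Rightarrow> real \<Rightarrow> real \<Rightarrow> real \<Rightarrow> real" where
  "storm_cubic_deriv \<gamma> a c v = (1 - \<gamma>) * a\<^sup>2 + 3 * \<gamma> * v\<^sup>2 - 3 * (v + c)\<^sup>2"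

lemma has_real_derivative_storm_cubic:
  "(storm_cubic \<gamma> a c has_real_derivative storm_cubic_deriv \<gamma> a c v) (at v)"
  unfolding storm_cubic_def [abs_def] storm_cubic_deriv_def
  by (auto intro!: derivative_eq_intros simp: power2_eq_square)

lemma storm_cubic_scale: "storm_cubic \<gamma> (k * a) (k * c) (k * v) = k ^ 3 * storm_cubic \<gamma> a c v"
  unfolding storm_cubic_def by (simp add: algebra_simps power2_eq_square power3_eq_cube)

lemma storm_cubic_antimono_c:
  assumes "c \<le> c'" "0 \<le> v + c"
  shows "storm_cubic \<gamma> a c' v \<le> storm_cubic \<gamma> a c v"
  using power_mono[of "v + c" "v + c'" 3] assms unfolding storm_cubic_def by simp

lemma storm_cubic_mono_a:
  assumes "0 \<le> a" "a \<le> a'" "0 \<le> v" "\<gamma> \<le> 1"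
  shows "storm_cubic \<gamma> a c v \<le> storm_cubic \<gamma> a' c v"
proof -
  have "(1 - \<gamma>) * a\<^sup>2 * v \<le> (1 - \<gamma>) * a'\<^sup>2 * v"
    using assms by (intro mult_right_mono mult_left_mono power_mono) auto
  then show ?thesis unfolding storm_cubic_def by simp
qed

lemma storm_cubic_neg_if_degenerate:
  assumes "\<gamma> \<le> 1" "\<gamma> = 1 \<or> a = 0" "0 < v" "0 < c"
  shows "storm_cubic \<gamma> a c v < 0"
proof -
  have "\<gamma> * v ^ 3 \<le> v ^ 3" using assms by (simp add: mult_left_le_one_le)
  moreover have "v ^ 3 < (v + c) ^ 3" using assms by (intro power_strict_mono) auto
  ultimately show ?thesis using assms(2) unfolding storm_cubic_def by auto
qed

lemma storm_cubic_factor: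
  assumes "\<gamma> < 1" "0 \<le> c" "0 < r1" "r1 < r2"
    and "storm_cubic \<gamma> a c r1 = 0" "storm_cubic \<gamma> a c r2 = 0"
  shows "\<exists>s\<le>0. \<forall>v. storm_cubic \<gamma> a c v = (\<gamma> - 1) * (v - r1) * (v - r2) * (v - s)"
proof -
  \<comment> \<open>the roots sum to \<open>3 c / (\<gamma> - 1)\<close>, which pins down the third root \<open>s\<close>\<close>
  define s where "s = 3 * c / (\<gamma> - 1) - r1 - r2"
  have sum: "(\<gamma> - 1) * (r1 + r2 + s) = 3 * c" using assms(1) by (simp add: s_def field_simps)
  define \<alpha> where "\<alpha> = (1 - \<gamma>) * a\<^sup>2 - 3 * c\<^sup>2 - (\<gamma> - 1) * (r1 * r2 + r1 * s + r2 * s)"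
  define \<beta> where "\<beta> = (\<gamma> - 1) * r1 * r2 * s - c ^ 3"
  have p: "storm_cubic \<gamma> a c v = (\<gamma> - 1) * (v - r1) * (v - r2) * (v - s) + \<alpha> * v + \<beta>" for v
  proof -
    have "storm_cubic \<gamma> a c v - ((\<gamma> - 1) * (v - r1) * (v - r2) * (v - s) + \<alpha> * v + \<beta>)
        = ((\<gamma> - 1) * (r1 + r2 + s) - 3 * c) * v\<^sup>2"
      unfolding storm_cubic_def \<alpha>_def \<beta>_def by (simp add: algebra_simps power2_eq_square power3_eq_cube)
    then show ?thesis using sum by simp
  qed
  have "\<alpha> * r1 + \<beta> = 0" "\<alpha> * r2 + \<beta> = 0" using p[of r1] p[of r2] assms(5,6) by simp_all
  then have "\<alpha> * r2 - \<alpha> * r1 = 0" by linarith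
  then have "\<alpha> * (r2 - r1) = 0" by (simp add: right_diff_distrib)
  then have "\<alpha> = 0" "\<beta> = 0" using assms(4) \<open>\<alpha> * r1 + \<beta> = 0\<close> by auto
  then have "(\<gamma> - 1) * (r1 * r2) * s = c ^ 3" unfolding \<beta>_def by (simp add: algebra_simps)
  moreover have "0 \<le> c ^ 3" "0 < r1 * r2" using assms by auto
  ultimately have "s \<le> 0" using assms(1) by (smt (verit) mult_neg_pos mult_pos_pos)
  with p \<open>\<alpha> = 0\<close> \<open>\<beta> = 0\<close> show ?thesis by (intro exI[of _ s]) simp
qed

lemma storm_cubic_two_roots:
  assumes "\<gamma> < 1" "0 \<le> c" "0 < r1" "r1 < r2"
    and "storm_cubic \<gamma> a c r1 = 0" "storm_cubic \<gamma> a c r2 = 0"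
  shows "\<And>v. r1 < v \<Longrightarrow> v < r2 \<Longrightarrow> 0 < storm_cubic \<gamma> a c v"
    and "\<And>v. r2 \<le> v \<Longrightarrow> storm_cubic \<gamma> a c v \<le> 0"
    and "0 < storm_cubic_deriv \<gamma> a c r1"
proof -
  obtain s where s: "s \<le> 0"
    and p: "\<And>v. storm_cubic \<gamma> a c v = (\<gamma> - 1) * (v - r1) * (v - r2) * (v - s)"
    using storm_cubic_factor[OF assms] by blast
  show "0 < storm_cubic \<gamma> a c v" if "r1 < v" "v < r2" for v
  proof -
    have "0 < (1 - \<gamma>) * (v - r1) * (r2 - v) * (v - s)"
      using that assms s by (intro mult_pos_pos) auto
    then show ?thesis unfolding p by (simp add: algebra_simps)
  qed
  show "storm_cubic \<gamma> a c v \<le> 0" if "r2 \<le> v" for v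
  proof -
    have "0 \<le> (1 - \<gamma>) * (v - r1) * (v - r2) * (v - s)"
      using that assms s by (intro mult_nonneg_nonneg) auto
    then show ?thesis unfolding p by (simp add: algebra_simps)
  qed
  have factored: "storm_cubic \<gamma> a c = (\<lambda>v. (\<gamma> - 1) * (v - r1) * (v - r2) * (v - s))"
    using p by auto
  have "(storm_cubic \<gamma> a c has_real_derivative (\<gamma> - 1) * (r1 - r2) * (r1 - s)) (at r1)"
    unfolding factored by (rule derivative_eq_intros refl)+ (simp add: algebra_simps)
  then have "storm_cubic_deriv \<gamma> a c r1 = (1 - \<gamma>) * (r2 - r1) * (r1 - s)"
    using DERIV_unique[OF has_real_derivative_storm_cubic] by (simp add: algebra_simps)
  also have "\<dots> > 0" using assms s by (intro mult_pos_pos) auto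
  finally show "0 < storm_cubic_deriv \<gamma> a c r1" .
qed

lemma storm_field_fst_nullcline:
  assumes "0 < v + c"
  shows "fst (storm_field \<gamma> a c (v, v / (v + c))) * (v + c) ^ 3 = v\<^sup>2 * storm_cubic \<gamma> a c v"
  using assms unfolding storm_field_def storm_cubic_def
  by (simp add: field_simps) (simp add: algebra_simps power2_eq_square power3_eq_cube)

lemma storm_equilibriumD:
  assumes "storm_equilibrium \<gamma> a c x" "0 \<le> c"
  shows "0 < fst x" "snd x = fst x / (fst x + c)" "storm_cubic \<gamma> a c (fst x) = 0"
proof -
  obtain v m where x: "x = (v, m)" by (cases x)
  from assms show v: "0 < fst x" and m: "snd x = fst x / (fst x + c)"
    by (auto simp: x storm_equilibrium_def is_equilibrium_def storm_field_def field_simps)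
  have "fst (storm_field \<gamma> a c x) = 0"
    using assms(1) by (simp add: storm_equilibrium_def is_equilibrium_def)
  then show "storm_cubic \<gamma> a c (fst x) = 0"
    using storm_field_fst_nullcline[of v c \<gamma> a] v assms(2) m by (simp add: x)
qed

lemma storm_equilibrium_gamma_lt_1:
  assumes "storm_equilibrium \<gamma> a c x" "\<gamma> \<le> 1" "0 < c"
  shows "\<gamma> < 1"
proof (rule ccontr)
  assume "\<not> \<gamma> < 1"
  then have "storm_cubic \<gamma> a c (fst x) < 0"
    using storm_equilibriumD(1)[OF assms(1)] assms by (intro storm_cubic_neg_if_degenerate) auto
  with storm_equilibriumD(3)[OF assms(1)] assms(3) show False by simp
qed

lemma storm_equilibrium_c_zero:
  assumes "storm_equilibrium \<gamma> a 0 x" "\<gamma> < 1"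
  shows "x = (\<bar>a\<bar>, 1)"
proof -
  obtain v m where x: "x = (v, m)" by (cases x)
  from storm_equilibriumD[of \<gamma> a 0 x] assms x
  have v: "0 < v" and m: "m = 1" and p: "storm_cubic \<gamma> a 0 v = 0" by auto
  have "(1 - \<gamma>) * (a\<^sup>2 - v\<^sup>2) * v = 0"
    using p unfolding storm_cubic_def by (simp add: algebra_simps power2_eq_square power3_eq_cube)
  then have "a\<^sup>2 = v\<^sup>2" using v assms(2) by simp
  then have "\<bar>a\<bar> = v" using v by (auto simp: power2_eq_iff)
  then show ?thesis using x m by simp
qed

lemma two_storm_equilibria_params_pos:
  assumes "storm_equilibrium \<gamma> a c U" "storm_equilibrium \<gamma> a c S" "U \<noteq> S"
    and "\<gamma> < 1" "0 \<le> a" "0 \<le> c"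
  shows "0 < c" "0 < a"
proof -
  show c: "0 < c"
    using assms storm_equilibrium_c_zero[of \<gamma> a U] storm_equilibrium_c_zero[of \<gamma> a S]
    by (cases "c = 0") auto
  show "0 < a"
    using storm_equilibriumD[OF assms(1,6)] storm_cubic_neg_if_degenerate[of \<gamma> a "fst U" c] assms c
    by (cases "a = 0") auto
qed

lemma storm_equilibria_fst_neq:
  assumes "storm_equilibrium \<gamma> a c U" "storm_equilibrium \<gamma> a c S" "U \<noteq> S" "0 \<le> c"
  shows "fst U \<noteq> fst S"
  using assms storm_equilibriumD(2)[OF assms(1,4)] storm_equilibriumD(2)[OF assms(2,4)]
  by (auto simp: prod_eq_iff)

lemma two_storm_equilibria_cubic_pos:
  assumes "storm_equilibrium \<gamma> a c U" "storm_equilibrium \<gamma> a c S" "U \<noteq> S" "\<gamma> < 1" "0 \<le> c"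
  shows "\<exists>w>0. 0 < storm_cubic \<gamma> a c w"
proof -
  define r1 r2 where "r1 = min (fst U) (fst S)" and "r2 = max (fst U) (fst S)"
  have roots: "0 < r1" "r1 < r2" "storm_cubic \<gamma> a c r1 = 0" "storm_cubic \<gamma> a c r2 = 0"
    using storm_equilibria_fst_neq[OF assms(1-3,5)]
      storm_equilibriumD[OF assms(1,5)] storm_equilibriumD[OF assms(2,5)]
    unfolding r1_def r2_def by (auto simp: min_def max_def)
  then show ?thesis
    using storm_cubic_two_roots(1)[OF assms(4,5) roots, of "(r1 + r2) / 2"]
    by (intro exI[of _ "(r1 + r2) / 2"]) auto
qed

section \<open>Stability of storm equilibria\<close>

lemma det_pos_if_eigenvalues_neg_re:
  fixes a b c d :: real
  assumes "\<And>z. (complex_of_real a - z) * (complex_of_real d - z) - complex_of_real b * complex_of_real c = 0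
    \<Longrightarrow> Re z < 0"
  shows "0 < a * d - b * c"
proof (rule ccontr)
  define t \<Delta> where "t = a + d" and "\<Delta> = a * d - b * c"
  assume "\<not> 0 < a * d - b * c"
  then have "\<Delta> \<le> 0" by (simp add: \<Delta>_def)
  \<comment> \<open>then the larger root of \<open>z\<^sup>2 - t z + \<Delta>\<close> is real and nonnegative\<close>
  define z where "z = (t + sqrt (t\<^sup>2 - 4 * \<Delta>)) / 2"
  have "0 \<le> t\<^sup>2 - 4 * \<Delta>" using \<open>\<Delta> \<le> 0\<close> zero_le_power2[of t] by linarith
  then have sq: "sqrt (t\<^sup>2 - 4 * \<Delta>) ^ 2 = t\<^sup>2 - 4 * \<Delta>" by simp
  have "\<bar>t\<bar> \<le> sqrt (t\<^sup>2 - 4 * \<Delta>)"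
    using real_sqrt_le_mono[of "t\<^sup>2" "t\<^sup>2 - 4 * \<Delta>"] \<open>\<Delta> \<le> 0\<close> by simp
  then have "0 \<le> z" by (auto simp: z_def abs_le_iff)
  have "(a - z) * (d - z) - b * c = 0"
    using sq unfolding z_def t_def \<Delta>_def by (simp add: power2_eq_square field_simps)
  then have "(complex_of_real a - z) * (complex_of_real d - z) - complex_of_real b * complex_of_real c = 0"
    by (metis of_real_0 of_real_diff of_real_mult)
  with assms have "Re (complex_of_real z) < 0" .
  with \<open>0 \<le> z\<close> show False by simp
qed

lemma storm_jacobian_det_nullcline:
  fixes \<gamma> a c v m :: real
  defines "x \<equiv> (v, m)"
  assumes "m * (v + c) = v"
  shows "(jac11 \<gamma> a c x * jac22 \<gamma> a c x - jac12 \<gamma> a c x * jac21 \<gamma> a c x) * (v + c) ^ 3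
    = - v\<^sup>2 * (v + c) * storm_cubic_deriv \<gamma> a c v + v * (v - 2 * c) * storm_cubic \<gamma> a c v"
proof -
  have "(jac11 \<gamma> a c x * jac22 \<gamma> a c x - jac12 \<gamma> a c x * jac21 \<gamma> a c x) * (v + c) ^ 3
      = 2 * v * (v + c) ^ 4 - 2 * \<gamma> * (m * (v + c)) ^ 3 * v * (v + c)
        - 3 * (m * (v + c))\<^sup>2 * ((1 - \<gamma>) * a\<^sup>2 + \<gamma> * v\<^sup>2) * (v + c - m * (v + c))"
    unfolding x_def jac11_def jac12_def jac21_def jac22_def
    by (simp add: algebra_simps power2_eq_square power3_eq_cube power4_eq_xxxx)
  also have "\<dots> = 2 * v * (v + c) ^ 4 - 2 * \<gamma> * v ^ 4 * (v + c) - 3 * c * v\<^sup>2 * ((1 - \<gamma>) * a\<^sup>2 + \<gamma> * v\<^sup>2)"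
    unfolding assms(2) by (simp add: algebra_simps power2_eq_square power3_eq_cube power4_eq_xxxx)
  also have "\<dots> = - v\<^sup>2 * (v + c) * storm_cubic_deriv \<gamma> a c v + v * (v - 2 * c) * storm_cubic \<gamma> a c v"
    unfolding storm_cubic_def storm_cubic_deriv_def
    by (simp add: algebra_simps power2_eq_square power3_eq_cube power4_eq_xxxx)
  finally show ?thesis .
qed

lemma storm_cubic_deriv_neg_if_stable:
  assumes "stable_eq \<gamma> a c (v, m)" "storm_equilibrium \<gamma> a c (v, m)" "0 \<le> c"
  shows "storm_cubic_deriv \<gamma> a c v < 0"
proof -
  have v: "0 < v" and "m = v / (v + c)" and p: "storm_cubic \<gamma> a c v = 0"
    using storm_equilibriumD[OF assms(2,3)] by auto
  then have m: "m * (v + c) = v" using assms(3) by simp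
  have "0 < jac11 \<gamma> a c (v, m) * jac22 \<gamma> a c (v, m) - jac12 \<gamma> a c (v, m) * jac21 \<gamma> a c (v, m)"
    using assms(1) by (intro det_pos_if_eigenvalues_neg_re) (auto simp: stable_eq_def jac_eigenvalue_def)
  then have "0 < (jac11 \<gamma> a c (v, m) * jac22 \<gamma> a c (v, m) - jac12 \<gamma> a c (v, m) * jac21 \<gamma> a c (v, m))
      * (v + c) ^ 3"
    using v assms(3) by simp
  then have "0 < - v\<^sup>2 * (v + c) * storm_cubic_deriv \<gamma> a c v"
    unfolding storm_jacobian_det_nullcline[OF m] p by simp
  moreover have "0 < v\<^sup>2 * (v + c)" using v assms(3) by simp
  ultimately show ?thesis using v assms(3) by (auto simp: mult_less_0_iff)
qed

lemma storm_cubic_pos_below_stable: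
  assumes "storm_equilibrium \<gamma> a c U" "storm_equilibrium \<gamma> a c S" "U \<noteq> S" "stable_eq \<gamma> a c S"
    and "\<gamma> < 1" "0 \<le> c" "0 < storm_cubic \<gamma> a c u"
  shows "u < fst S"
proof -
  have U: "0 < fst U" "storm_cubic \<gamma> a c (fst U) = 0"
    and S: "0 < fst S" "storm_cubic \<gamma> a c (fst S) = 0"
    using storm_equilibriumD[OF assms(1,6)] storm_equilibriumD[OF assms(2,6)] by auto
  have "storm_cubic_deriv \<gamma> a c (fst S) < 0"
    using storm_cubic_deriv_neg_if_stable[of \<gamma> a c "fst S" "snd S"] assms by simp
  \<comment> \<open>the cubic increases through the smaller root, so the stable equilibrium is the larger one\<close>
  then have "fst U < fst S"
    using storm_cubic_two_roots(3)[OF assms(5,6) S(1) _ S(2) U(2)]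
      storm_equilibria_fst_neq[OF assms(1-3,6)]
    by fastforce
  then show ?thesis
    using storm_cubic_two_roots(2)[OF assms(5,6) U(1) _ U(2) S(2)] assms(7) by (meson leD leI)
qed

section \<open>A trapping region of the storm system\<close>

lemma storm_field_scale:
  "storm_field \<gamma> (k * a) (k * c) (k * v, m)
    = (k\<^sup>2 * fst (storm_field \<gamma> a c (v, m)), k * snd (storm_field \<gamma> a c (v, m)))"
  unfolding storm_field_def by (simp add: algebra_simps power2_eq_square)

lemma storm_field_fst_mono:
  assumes "0 \<le> \<gamma>" "\<gamma> \<le> 1" "0 \<le> a" "a \<le> a'" "0 \<le> m" "m \<le> m'"
  shows "fst (storm_field \<gamma> a c (v, m)) \<le> fst (storm_field \<gamma> a' c' (v, m'))"
proof -
  have "(1 - \<gamma>) * a\<^sup>2 \<le> (1 - \<gamma>) * a'\<^sup>2"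
    using assms by (intro mult_left_mono power_mono) auto
  then have "m ^ 3 * ((1 - \<gamma>) * a\<^sup>2 + \<gamma> * v\<^sup>2) \<le> m' ^ 3 * ((1 - \<gamma>) * a'\<^sup>2 + \<gamma> * v\<^sup>2)"
    using assms by (intro mult_mono power_mono) auto
  then show ?thesis unfolding storm_field_def by (simp add: algebra_simps)
qed

lemma storm_field_snd_mono:
  assumes "0 \<le> m" "m \<le> 1" "v \<le> v'" "c' \<le> c"
  shows "snd (storm_field \<gamma> a c (v, m)) \<le> snd (storm_field \<gamma> a' c' (v', m))"
  using assms mult_left_mono[of v v' "1 - m"] mult_right_mono[of c' c m]
  unfolding storm_field_def by simp

lemma storm_field_pos_near_nullcline:
  assumes "0 < w" "0 \<le> c" "0 < storm_cubic \<gamma> a c w"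
  shows "\<exists>q>0. q < w / (w + c) \<and> 0 < fst (storm_field \<gamma> a c (w, q)) \<and> 0 < snd (storm_field \<gamma> a c (w, q))"
proof -
  define q0 where "q0 = w / (w + c)"
  have "0 < w + c" "0 < q0" using assms by (simp_all add: q0_def)
  define g where "g q = (1 - \<gamma>) * a\<^sup>2 * q ^ 3 - (1 - \<gamma> * q ^ 3) * w\<^sup>2" for q
  have g: "g q = fst (storm_field \<gamma> a c (w, q))" for q by (simp add: g_def storm_field_def)
  have "0 < g q0 * (w + c) ^ 3"
    using storm_field_fst_nullcline[OF \<open>0 < w + c\<close>] assms by (simp add: g q0_def)
  then have "0 < g q0" using \<open>0 < w + c\<close> by (simp add: zero_less_mult_iff)
  moreover have "(g \<longlongrightarrow> g q0) (at_left q0)" unfolding g_def by (intro tendsto_intros)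
  ultimately have "eventually (\<lambda>q. 0 < g q) (at_left q0)" by (simp add: order_tendstoD(1))
  moreover have "eventually (\<lambda>q. q \<in> {0<..<q0}) (at_left q0)"
    using eventually_at_left_real[OF \<open>0 < q0\<close>] .
  ultimately obtain q where "0 < g q" "q \<in> {0<..<q0}"
    using eventually_happens[OF eventually_conj] trivial_limit_at_left_real by blast
  moreover have "0 < snd (storm_field \<gamma> a c (w, q))"
    using \<open>q \<in> {0<..<q0}\<close> \<open>0 < w + c\<close> by (simp add: storm_field_def q0_def field_simps)
  ultimately show ?thesis unfolding g q0_def by auto
qed

lemma storm_solution_trapped:
  fixes A C k v m :: "real \<Rightarrow> real"
  assumes "0 \<le> \<gamma>" "\<gamma> \<le> 1"
    and sol: "\<And>t. ((\<lambda>t. (v t, m t)) has_vector_derivative storm_field \<gamma> (A t) (C t) (v t, m t)) (at t)"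
    and k: "antimono k" "continuous_on UNIV k" "\<And>t. 0 < k t"
    and dom: "\<And>t. k t * a \<le> A t" "\<And>t. C t \<le> k t * c"
    and "0 \<le> a" "0 \<le> w" "0 \<le> q" "q \<le> 1"
    and field: "0 < fst (storm_field \<gamma> a c (w, q))" "0 < snd (storm_field \<gamma> a c (w, q))"
    and start: "eventually (\<lambda>t. k t * w < v t \<and> q < m t) at_bot"
  shows "k t * w < v t \<and> q < m t"
proof (rule antimono_barrier_invariant[where b = "\<lambda>t. k t * w"])
  define F where "F t = storm_field \<gamma> (A t) (C t) (v t, m t)" for t
  show "(v has_real_derivative fst (F t)) (at t)" "(m has_real_derivative snd (F t)) (at t)" for t
    using has_vector_derivative_PairD[OF sol[of t]]
    by (simp_all add: has_real_derivative_iff_has_vector_derivative F_def)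
  show "antimono (\<lambda>t. k t * w)"
    using k(1) \<open>0 \<le> w\<close> by (auto simp: antimono_def mult_right_mono)
  show "continuous_on UNIV (\<lambda>t. k t * w)" using k(2) by (intro continuous_intros)
  show "0 < fst (F t)" if "v t = k t * w" "q \<le> m t" for t
  proof -
    have "0 < (k t)\<^sup>2 * fst (storm_field \<gamma> a c (w, q))" using field k(3)[of t] by simp
    also have "\<dots> = fst (storm_field \<gamma> (k t * a) (k t * c) (k t * w, q))"
      by (simp add: storm_field_scale)
    also have "\<dots> \<le> fst (F t)"
      unfolding F_def that(1) using assms dom that(2) mult_nonneg_nonneg[OF less_imp_le[OF k(3)]]
      by (intro storm_field_fst_mono) auto
    finally show ?thesis .
  qed
  show "0 < snd (F t)" if "m t = q" "k t * w \<le> v t" for t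
  proof -
    have "0 < k t * snd (storm_field \<gamma> a c (w, q))" using field k(3)[of t] by simp
    also have "\<dots> = snd (storm_field \<gamma> (k t * a) (k t * c) (k t * w, q))"
      by (simp add: storm_field_scale)
    also have "\<dots> \<le> snd (F t)"
      unfolding F_def that(1) using assms dom that(2) by (intro storm_field_snd_mono) auto
    finally show ?thesis .
  qed
qed (use start in auto)

lemma storm_solution_enters_region:
  fixes k v m :: "real \<Rightarrow> real"
  assumes eqs: "storm_equilibrium \<gamma> A0 C0 U" "storm_equilibrium \<gamma> A0 C0 S" "U \<noteq> S"
      "stable_eq \<gamma> A0 C0 S"
    and "\<gamma> < 1" "0 \<le> C0"
    and lim: "((\<lambda>t. (v t, m t)) \<longlongrightarrow> S) at_bot" "(k \<longlongrightarrow> k0) at_bot"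
    and "0 < k0" "k0 * a \<le> A0" "C0 \<le> k0 * c" "0 \<le> a" "0 < w"
    and q: "q < w / (w + c)" and p: "0 < storm_cubic \<gamma> a c w"
  shows "eventually (\<lambda>t. k t * w < v t \<and> q < m t) at_bot"
proof -
  have "0 \<le> k0 * c" using assms by linarith
  then have "0 \<le> c" using \<open>0 < k0\<close> by (simp add: zero_le_mult_iff)
  have "0 < k0 ^ 3 * storm_cubic \<gamma> a c w" using p \<open>0 < k0\<close> by simp
  also have "\<dots> = storm_cubic \<gamma> (k0 * a) (k0 * c) (k0 * w)" by (simp add: storm_cubic_scale)
  also have "\<dots> \<le> storm_cubic \<gamma> (k0 * a) C0 (k0 * w)"
    using assms by (intro storm_cubic_antimono_c) auto
  also have "\<dots> \<le> storm_cubic \<gamma> A0 C0 (k0 * w)"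
    using assms by (intro storm_cubic_mono_a) auto
  finally have v_below: "k0 * w < fst S"
    using storm_cubic_pos_below_stable[OF eqs \<open>\<gamma> < 1\<close> \<open>0 \<le> C0\<close>] by blast
  have "q < (k0 * w) / (k0 * w + k0 * c)"
    using q \<open>0 < k0\<close> by (simp add: distrib_left[symmetric])
  also have "\<dots> \<le> (k0 * w) / (k0 * w + C0)"
    using assms \<open>0 \<le> c\<close> by (intro divide_left_mono mult_pos_pos add_pos_nonneg) auto
  also have "\<dots> \<le> fst S / (fst S + C0)"
  proof -
    have "k0 * w * C0 \<le> fst S * C0" using v_below \<open>0 \<le> C0\<close> by (simp add: mult_right_mono)
    moreover have "0 < k0 * w + C0" "0 < fst S + C0"
      using mult_pos_pos[OF \<open>0 < k0\<close> \<open>0 < w\<close>] v_below \<open>0 \<le> C0\<close> by linarith+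
    ultimately show ?thesis by (simp add: field_simps)
  qed
  also have "\<dots> = snd S" using storm_equilibriumD(2)[OF eqs(2) \<open>0 \<le> C0\<close>] by simp
  finally have m_below: "q < snd S" .
  have "((\<lambda>t. v t - k t * w) \<longlongrightarrow> fst S - k0 * w) at_bot"
    using tendsto_fst[OF lim(1)] lim(2) by (intro tendsto_intros) auto
  then have "eventually (\<lambda>t. 0 < v t - k t * w) at_bot"
    using v_below by (intro order_tendstoD(1)) auto
  moreover have "eventually (\<lambda>t. q < m t) at_bot"
    using tendsto_snd[OF lim(1)] m_below by (intro order_tendstoD(1)) auto
  ultimately show ?thesis by eventually_elim auto
qed

lemma storm_solution_bounded_below:
  fixes A C k v m :: "real \<Rightarrow> real"
  assumes "0 \<le> \<gamma>" "\<gamma> < 1"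
    and eqs: "storm_equilibrium \<gamma> A0 C0 U" "storm_equilibrium \<gamma> A0 C0 S" "U \<noteq> S"
      "stable_eq \<gamma> A0 C0 S"
    and sol: "\<And>t. ((\<lambda>t. (v t, m t)) has_vector_derivative storm_field \<gamma> (A t) (C t) (v t, m t)) (at t)"
    and from_S: "((\<lambda>t. (v t, m t)) \<longlongrightarrow> S) at_bot"
    and lim: "(A \<longlongrightarrow> A0) at_bot" "(C \<longlongrightarrow> C0) at_bot"
    and k: "antimono k" "continuous_on UNIV k" "(k \<longlongrightarrow> k0) at_bot" "(k \<longlongrightarrow> kp) at_top" "0 < kp"
    and dom: "\<And>t. k t * a \<le> A t" "\<And>t. C t \<le> k t * c"
    and "0 \<le> C0" "0 \<le> a" "0 \<le> c" "0 < w" "0 < q" "q < w / (w + c)"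
    and p: "0 < storm_cubic \<gamma> a c w"
    and field: "0 < fst (storm_field \<gamma> a c (w, q))" "0 < snd (storm_field \<gamma> a c (w, q))"
  shows "kp * w < v t"
proof -
  have k_ge: "kp \<le> k t" for t using antimono_tendsto_at_top_le[OF k(1,4)] .
  then have k_pos: "0 < k t" for t using k(5) less_le_trans by blast
  have "kp \<le> k0" using k_ge by (intro tendsto_lowerbound[OF k(3)] always_eventually) auto
  with k(5) have "0 < k0" by simp
  moreover have "k0 * a \<le> A0"
    by (rule tendsto_le[OF _ lim(1) tendsto_mult_right[OF k(3)]]) (simp_all add: dom(1))
  moreover have "C0 \<le> k0 * c"
    by (rule tendsto_le[OF _ tendsto_mult_right[OF k(3)] lim(2)]) (simp_all add: dom(2))
  ultimately have start: "eventually (\<lambda>t. k t * w < v t \<and> q < m t) at_bot"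
    using storm_solution_enters_region[OF eqs \<open>\<gamma> < 1\<close> \<open>0 \<le> C0\<close> from_S k(3) _ _ _ \<open>0 \<le> a\<close> \<open>0 < w\<close>
        \<open>q < w / (w + c)\<close> p]
    by blast
  have "w / (w + c) \<le> 1" using \<open>0 < w\<close> \<open>0 \<le> c\<close> by simp
  with \<open>q < w / (w + c)\<close> have "q \<le> 1" by linarith
  have "k t * w < v t"
    using storm_solution_trapped[OF \<open>0 \<le> \<gamma>\<close> _ sol k(1,2) k_pos dom \<open>0 \<le> a\<close> less_imp_le[OF \<open>0 < w\<close>]
        less_imp_le[OF \<open>0 < q\<close>] \<open>q \<le> 1\<close> field start] \<open>\<gamma> < 1\<close>
    by simp
  moreover have "kp * w \<le> k t * w" using k_ge \<open>0 < w\<close> by (simp add: mult_right_mono)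
  ultimately show ?thesis by simp
qed

section \<open>No rate-induced tipping to the origin\<close>

lemma exists_dominating_parameters:
  fixes A C :: "real \<Rightarrow> real"
  assumes "\<And>t. 0 < A t" "\<And>t. 0 < C t" "continuous_on UNIV A" "continuous_on UNIV C"
    and "(A \<longlongrightarrow> A0) at_bot" "(C \<longlongrightarrow> C0) at_bot" "(A \<longlongrightarrow> Ap) at_top" "(C \<longlongrightarrow> Cp) at_top"
    and "0 < A0" "0 < C0" "0 < Ap" "0 < Cp"
    and pos: "\<And>t. \<exists>w>0. 0 < storm_cubic \<gamma> (A t) (C t) w"
      "\<exists>w>0. 0 < storm_cubic \<gamma> A0 C0 w" "\<exists>w>0. 0 < storm_cubic \<gamma> Ap Cp w"
  obtains a c w where "0 < a" "0 < c" "0 < w" "0 < storm_cubic \<gamma> a c w"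
    "\<And>t. C t / A t \<le> c / a" "C0 / A0 \<le> c / a"
proof -
  define f where "f t = C t / A t" for t
  have f_bot: "(f \<longlongrightarrow> C0 / A0) at_bot" and f_top: "(f \<longlongrightarrow> Cp / Ap) at_top"
    unfolding f_def using assms by (auto intro!: tendsto_divide)
  have "continuous_on UNIV f"
    unfolding f_def using assms(1,3,4) by (intro continuous_intros) (auto simp: less_imp_neq[symmetric])
  then consider (max) t where "\<And>s. f s \<le> f t" | (bot) "\<And>s. f s \<le> C0 / A0" | (top) "\<And>s. f s \<le> Cp / Ap"
    using continuous_bounded_by_max_or_limit[OF _ f_bot f_top] by blast
  then have "\<exists>a c. 0 < a \<and> 0 < c \<and> (\<exists>w>0. 0 < storm_cubic \<gamma> a c w) \<and> (\<forall>s. f s \<le> c / a)"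
  proof cases
    case max
    then show ?thesis using assms(1,2) pos(1)[of t] unfolding f_def by blast
  next
    case bot
    then show ?thesis using assms(9,10) pos(2) by blast
  next
    case top
    then show ?thesis using assms(11,12) pos(3) by blast
  qed
  then obtain a c w where "0 < a" "0 < c" "0 < w" "0 < storm_cubic \<gamma> a c w" and bound: "\<And>s. f s \<le> c / a"
    by blast
  moreover have "C0 / A0 \<le> c / a"
    using f_bot by (rule tendsto_upperbound) (simp_all add: bound)
  ultimately show thesis using that unfolding f_def by blast
qed

lemma exists_antimono_scaling:
  fixes A C :: "real \<Rightarrow> real"
  assumes "antimono A \<or> antimono C" "\<And>t. 0 < A t" "\<And>t. 0 < C t"
    and "continuous_on UNIV A" "continuous_on UNIV C"
    and "(A \<longlongrightarrow> A0) at_bot" "(C \<longlongrightarrow> C0) at_bot" "(A \<longlongrightarrow> Ap) at_top" "(C \<longlongrightarrow> Cp) at_top"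
    and "0 < Ap" "0 < Cp" "0 < a" "0 < c" "\<And>t. C t / A t \<le> c / a"
  obtains k k0 kp where "antimono k" "continuous_on UNIV k" "(k \<longlongrightarrow> k0) at_bot" "(k \<longlongrightarrow> kp) at_top"
    "0 < kp" "\<And>t. k t * a \<le> A t" "\<And>t. C t \<le> k t * c"
proof -
  have ratio: "C t * a \<le> c * A t" for t
    using assms(14)[of t] assms(2)[of t] \<open>0 < a\<close> by (simp add: field_simps)
  from assms(1) show thesis
  proof
    assume "antimono A"
    show thesis
    proof (rule that[of "\<lambda>t. A t / a" "A0 / a" "Ap / a"])
      show "antimono (\<lambda>t. A t / a)"
        using \<open>antimono A\<close> \<open>0 < a\<close> by (auto simp: antimono_def divide_right_mono)
      show "C t \<le> A t / a * c" for t using ratio[of t] \<open>0 < a\<close> by (simp add: field_simps)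
    qed (use assms in \<open>auto intro!: continuous_intros tendsto_intros\<close>)
  next
    assume "antimono C"
    show thesis
    proof (rule that[of "\<lambda>t. C t / c" "C0 / c" "Cp / c"])
      show "antimono (\<lambda>t. C t / c)"
        using \<open>antimono C\<close> \<open>0 < c\<close> by (auto simp: antimono_def divide_right_mono)
      show "C t / c * a \<le> A t" for t using ratio[of t] \<open>0 < c\<close> by (simp add: field_simps)
    qed (use assms in \<open>auto intro!: continuous_intros tendsto_intros\<close>)
  qed
qed

lemma no_storm_tipping_to_origin:
  fixes A C v m :: "real \<Rightarrow> real" and pu ps :: "real \<Rightarrow> real \<times> real"
  assumes "0 \<le> \<gamma>" "\<gamma> \<le> 1"
    and A: "\<And>t. 0 < A t" "continuous_on UNIV A" "(A \<longlongrightarrow> A0) at_bot" "(A \<longlongrightarrow> Ap) at_top"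
    and C: "\<And>t. 0 < C t" "continuous_on UNIV C" "(C \<longlongrightarrow> C0) at_bot" "(C \<longlongrightarrow> Cp) at_top"
    and bot: "storm_equilibrium \<gamma> A0 C0 U0" "storm_equilibrium \<gamma> A0 C0 S0" "U0 \<noteq> S0"
      "stable_eq \<gamma> A0 C0 S0"
    and top: "storm_equilibrium \<gamma> Ap Cp Up" "storm_equilibrium \<gamma> Ap Cp Sp" "Up \<noteq> Sp"
    and path: "\<And>t. storm_equilibrium \<gamma> (A t) (C t) (pu t)" "\<And>t. storm_equilibrium \<gamma> (A t) (C t) (ps t)"
      "\<And>t. pu t \<noteq> ps t"
    and nonincr: "antimono A \<or> antimono C"
    and sol: "\<And>t. ((\<lambda>t. (v t, m t)) has_vector_derivative storm_field \<gamma> (A t) (C t) (v t, m t)) (at t)"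
    and from_S0: "((\<lambda>t. (v t, m t)) \<longlongrightarrow> S0) at_bot"
  shows "\<not> ((\<lambda>t. (v t, m t)) \<longlongrightarrow> (0, 0)) at_top"
proof
  assume to_origin: "((\<lambda>t. (v t, m t)) \<longlongrightarrow> (0, 0)) at_top"
  have "\<gamma> < 1" using storm_equilibrium_gamma_lt_1[OF path(1) \<open>\<gamma> \<le> 1\<close> C(1)] .
  have nonneg: "0 \<le> L" if "(f \<longlongrightarrow> L) F" "F \<noteq> bot" "\<And>t. 0 < f t" for f :: "real \<Rightarrow> real" and L F
    using that(2,3) by (intro tendsto_lowerbound[OF that(1)] always_eventually) (auto simp: less_imp_le)
  have "0 \<le> A0" "0 \<le> C0" "0 \<le> Ap" "0 \<le> Cp"
    using nonneg[OF A(3)] nonneg[OF C(3)] nonneg[OF A(4)] nonneg[OF C(4)] A(1) C(1) by auto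
  then have pos: "0 < A0" "0 < C0" "0 < Ap" "0 < Cp"
    using two_storm_equilibria_params_pos[OF bot(1-3) \<open>\<gamma> < 1\<close>]
      two_storm_equilibria_params_pos[OF top \<open>\<gamma> < 1\<close>] by auto
  obtain a c w where "0 < a" "0 < c" "0 < w" and p: "0 < storm_cubic \<gamma> a c w"
    and ratio: "\<And>t. C t / A t \<le> c / a" "C0 / A0 \<le> c / a"
    using exists_dominating_parameters[OF A(1) C(1) A(2) C(2) A(3) C(3) A(4) C(4) pos]
      two_storm_equilibria_cubic_pos[OF path \<open>\<gamma> < 1\<close> less_imp_le[OF C(1)]]
      two_storm_equilibria_cubic_pos[OF bot(1-3) \<open>\<gamma> < 1\<close>] two_storm_equilibria_cubic_pos[OF top \<open>\<gamma> < 1\<close>]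
      \<open>0 \<le> C0\<close> \<open>0 \<le> Cp\<close> by metis
  obtain q where "0 < q" "q < w / (w + c)"
    and field: "0 < fst (storm_field \<gamma> a c (w, q))" "0 < snd (storm_field \<gamma> a c (w, q))"
    using storm_field_pos_near_nullcline[OF \<open>0 < w\<close> _ p] \<open>0 < c\<close> by auto
  obtain k k0 kp where k: "antimono k" "continuous_on UNIV k" "(k \<longlongrightarrow> k0) at_bot"
      "(k \<longlongrightarrow> kp) at_top" "0 < kp" and dom: "\<And>t. k t * a \<le> A t" "\<And>t. C t \<le> k t * c"
    using exists_antimono_scaling[OF nonincr A(1) C(1) A(2) C(2) A(3) C(3) A(4) C(4)
        pos(3,4) \<open>0 < a\<close> \<open>0 < c\<close> ratio(1)] by blast
  have above: "kp * w < v t" for t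
    using storm_solution_bounded_below[OF \<open>0 \<le> \<gamma>\<close> \<open>\<gamma> < 1\<close> bot sol from_S0 A(3) C(3) k dom]
      pos(2) \<open>0 < a\<close> \<open>0 < c\<close> \<open>0 < w\<close> \<open>0 < q\<close> \<open>q < w / (w + c)\<close> p field by simp
  have "eventually (\<lambda>t. v t < kp * w) at_top"
    using tendsto_fst[OF to_origin] k(5) \<open>0 < w\<close> by (intro order_tendstoD(2)) auto
  then obtain t where "v t < kp * w" by (auto simp: eventually_at_top_linorder)
  with above[of t] show False by simp
qed

lemma C2_fun_continuous:
  assumes "C2_fun f"
  shows "continuous_on UNIV f"
proof -
  obtain f' where "\<And>t. (f has_real_derivative f' t) (at t)" using assms unfolding C2_fun_def by blast
  then show ?thesis by (intro continuous_at_imp_continuous_on ballI DERIV_isCont)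
qed

lemma rescaled_parameter_path:
  fixes \<Lambda> g :: "real \<Rightarrow> real"
  assumes "continuous_on UNIV \<Lambda>" "continuous_on UNIV g" "0 < r"
    and "(\<Lambda> \<longlongrightarrow> l1) at_bot" "(\<Lambda> \<longlongrightarrow> l2) at_top"
  shows "continuous_on UNIV (\<lambda>\<tau>. g (\<Lambda> (r * \<tau>)))"
    and "((\<lambda>\<tau>. g (\<Lambda> (r * \<tau>))) \<longlongrightarrow> g l1) at_bot"
    and "((\<lambda>\<tau>. g (\<Lambda> (r * \<tau>))) \<longlongrightarrow> g l2) at_top"
proof -
  have cont: "isCont g x" for x
    using assms(2) by (simp add: continuous_on_eq_continuous_at)
  show "continuous_on UNIV (\<lambda>\<tau>. g (\<Lambda> (r * \<tau>)))"
    by (rule continuous_on_compose2[OF assms(2) continuous_on_compose2[OF assms(1)]])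
      (auto intro: continuous_intros)
  have "filterlim (\<lambda>\<tau>. r * \<tau>) at_bot at_bot" "filterlim (\<lambda>\<tau>. r * \<tau>) at_top at_top"
    using filterlim_tendsto_pos_mult_at_bot[OF tendsto_const \<open>0 < r\<close> filterlim_ident]
      filterlim_tendsto_pos_mult_at_top[OF tendsto_const \<open>0 < r\<close> filterlim_ident] .
  then show "((\<lambda>\<tau>. g (\<Lambda> (r * \<tau>))) \<longlongrightarrow> g l1) at_bot" "((\<lambda>\<tau>. g (\<Lambda> (r * \<tau>))) \<longlongrightarrow> g l2) at_top"
    using isCont_tendsto_compose[OF cont filterlim_compose[OF assms(4)]]
      isCont_tendsto_compose[OF cont filterlim_compose[OF assms(5)]] by auto
qed

theorem theorem3p8:
  fixes \<gamma> r lm lp Vpm :: real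
    and \<Lambda> Vp c :: "real \<Rightarrow> real"
    and Um Sm Up Sp :: "real \<times> real"
    and pu ps :: "real \<Rightarrow> real \<times> real"
  assumes gamma: "0 \<le> \<gamma>" "\<gamma> \<le> 1"
    and Lambda_C2: "C2_fun \<Lambda>"
    and Lambda_mono: "mono \<Lambda>"
    and Lambda_bot: "(\<Lambda> \<longlongrightarrow> lm) at_bot"
    and Lambda_top: "(\<Lambda> \<longlongrightarrow> lp) at_top"
    and r_pos: "r > 0"
    and Vp_cont: "continuous_on UNIV Vp"
    and c_cont: "continuous_on UNIV c"
    and Vp_pos: "\<And>\<tau>. Vp (\<Lambda> (r * \<tau>)) > 0"
    and c_pos: "\<And>\<tau>. c (\<Lambda> (r * \<tau>)) > 0"
    and Vpm_lim: "((\<lambda>\<tau>. Vp (\<Lambda> (r * \<tau>))) \<longlongrightarrow> Vpm) at_bot"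
    and Vpm_pos: "Vpm > 0"
    (* three equilibria at lambda^- : O, saddle U^-, stable S^- *)
    and eq_minus: "phys_equilibria \<gamma> (Vp lm / Vpm) (c lm) = {(0, 0), Um, Sm}"
    and storm_minus: "storm_equilibrium \<gamma> (Vp lm / Vpm) (c lm) Um"
                     "storm_equilibrium \<gamma> (Vp lm / Vpm) (c lm) Sm" "Um \<noteq> Sm"
    and Um_saddle: "saddle_eq \<gamma> (Vp lm / Vpm) (c lm) Um"
    and Sm_stable: "stable_eq \<gamma> (Vp lm / Vpm) (c lm) Sm"
    (* three equilibria at lambda^+ : O, U^+, S^+ *)
    and eq_plus: "phys_equilibria \<gamma> (Vp lp / Vpm) (c lp) = {(0, 0), Up, Sp}"
    and storm_plus: "storm_equilibrium \<gamma> (Vp lp / Vpm) (c lp) Up"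
                    "storm_equilibrium \<gamma> (Vp lp / Vpm) (c lp) Sp" "Up \<noteq> Sp"
    (* continuous paths of saddle and stable storm equilibria *)
    and pu_cont: "continuous_on UNIV pu"
    and ps_cont: "continuous_on UNIV ps"
    and pu_saddle: "\<And>\<tau>. storm_equilibrium \<gamma> (Vp (\<Lambda> (r * \<tau>)) / Vpm) (c (\<Lambda> (r * \<tau>))) (pu \<tau>)
                        \<and> saddle_eq \<gamma> (Vp (\<Lambda> (r * \<tau>)) / Vpm) (c (\<Lambda> (r * \<tau>))) (pu \<tau>)"
    and ps_stable: "\<And>\<tau>. storm_equilibrium \<gamma> (Vp (\<Lambda> (r * \<tau>)) / Vpm) (c (\<Lambda> (r * \<tau>))) (ps \<tau>)
                        \<and> stable_eq \<gamma> (Vp (\<Lambda> (r * \<tau>)) / Vpm) (c (\<Lambda> (r * \<tau>))) (ps \<tau>)"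
    and pu_ne_ps: "\<And>\<tau>. pu \<tau> \<noteq> ps \<tau>"
    and pu_bot: "(pu \<longlongrightarrow> Um) at_bot" and pu_top: "(pu \<longlongrightarrow> Up) at_top"
    and ps_bot: "(ps \<longlongrightarrow> Sm) at_bot" and ps_top: "(ps \<longlongrightarrow> Sp) at_top"
    (* monotonicity hypothesis *)
    and nonincr: "antimono (\<lambda>\<tau>. Vp (\<Lambda> (r * \<tau>))) \<or> antimono (\<lambda>\<tau>. c (\<Lambda> (r * \<tau>)))"
  shows "\<forall>v m :: real \<Rightarrow> real.
           (\<forall>\<tau>. ((\<lambda>\<tau>. (v \<tau>, m \<tau>)) has_vector_derivative
                    storm_field \<gamma> (Vp (\<Lambda> (r * \<tau>)) / Vpm) (c (\<Lambda> (r * \<tau>))) (v \<tau>, m \<tau>)) (at \<tau>))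
         \<and> ((\<lambda>\<tau>. (v \<tau>, m \<tau>)) \<longlongrightarrow> Sm) at_bot
         \<longrightarrow> \<not> ((\<lambda>\<tau>. (v \<tau>, m \<tau>)) \<longlongrightarrow> (0, 0)) at_top"
proof (intro allI impI, elim conjE)
  \<comment> \<open>The argument needs only two distinct storm equilibria along the path and at both ends and the
    stability of \<open>S\<^sup>-\<close>.\<close>
  fix v m :: "real \<Rightarrow> real"
  define A C where "A \<tau> = Vp (\<Lambda> (r * \<tau>)) / Vpm" and "C \<tau> = c (\<Lambda> (r * \<tau>))" for \<tau>
  assume "\<forall>\<tau>. ((\<lambda>\<tau>. (v \<tau>, m \<tau>)) has_vector_derivative
      storm_field \<gamma> (Vp (\<Lambda> (r * \<tau>)) / Vpm) (c (\<Lambda> (r * \<tau>))) (v \<tau>, m \<tau>)) (at \<tau>)"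
    and from_Sm: "((\<lambda>\<tau>. (v \<tau>, m \<tau>)) \<longlongrightarrow> Sm) at_bot"
  then have sol: "((\<lambda>\<tau>. (v \<tau>, m \<tau>)) has_vector_derivative
      storm_field \<gamma> (A t) (C t) (v t, m t)) (at t)" for t
    by (simp add: A_def C_def)
  note path_props = rescaled_parameter_path[OF C2_fun_continuous[OF Lambda_C2] _ r_pos Lambda_bot Lambda_top]
  have A: "\<And>t. 0 < A t" "continuous_on UNIV A"
    "(A \<longlongrightarrow> Vp lm / Vpm) at_bot" "(A \<longlongrightarrow> Vp lp / Vpm) at_top"
    unfolding A_def using Vp_pos Vpm_pos path_props[OF Vp_cont]
    by (auto intro!: continuous_intros tendsto_intros)
  have C: "\<And>t. 0 < C t" "continuous_on UNIV C" "(C \<longlongrightarrow> c lm) at_bot" "(C \<longlongrightarrow> c lp) at_top"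
    unfolding C_def using c_pos path_props[OF c_cont] by auto
  have mono: "antimono A \<or> antimono C"
    using nonincr Vpm_pos by (auto simp: A_def C_def antimono_def divide_right_mono)
  have path: "storm_equilibrium \<gamma> (A t) (C t) (pu t)" "storm_equilibrium \<gamma> (A t) (C t) (ps t)" for t
    using pu_saddle ps_stable by (simp_all add: A_def C_def)
  show "\<not> ((\<lambda>\<tau>. (v \<tau>, m \<tau>)) \<longlongrightarrow> (0, 0)) at_top"
    by (rule no_storm_tipping_to_origin[OF gamma A C storm_minus Sm_stable storm_plus path pu_ne_ps
          mono sol from_Sm])
qed

end
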